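(* Let $(X,*,\circ)$ be a left skew brace and $R,S$ congruences on $X$. The following are equivalent: (1) $[I_R,I_S]=0$; (2) every element of $I_R$ commutes with every element of $I_S$ in $(X,* )$, every element of $I_R$ commutes with every element of $I_S$ in $(X,\circ)$, and $x*y^{-*}*z=x\circ y^{-\circ}\circ z$ for all $x,y,z\in X$ with $x\,R\,y$ and $y\,S\,z$; (3) $[R,S]=0$. In particular the category $\mathsf{SKB}$ of left skew braces satisfies (Huq=Smith).
   Context: A (left) skew brace is a triple $(A,*,\circ)$ with $(A,* )$ and $(A,\circ)$ groups such that $a\circ(b*c)=(a\circ b)*a^{-*}*(a\circ c)$ for all $a,b,c\in A$; $a^{-*}$, $a^{-\circ}$ denote inverses in $(A,* )$, $(A,\circ)$; the two groups share the identity $1$. Morphisms are maps that are homomorphisms for both operations; products are componentwise. A congruence on $X$ is an equivalence relation $R\subseteq X\times X$ that is a sub-skew brace of $X\times X$; $I_R=\{x\in X: x\,R\,1\}$. For sub-skew braces $U,V$ of $X$, $[U,V]=0$ means there exists a skew brace morphism $\varphi\colon U\times V\to X$ with $\varphi(u,1)=u$, $\varphi(1,v)=v$. For congruences $R,S$, let $R\times_X S=\{(x,y,z): xRy,\ ySz\}$ (a sub-skew brace of $X^3$); $[R,S]=0$ means there exists a skew brace morphism $p\colon R\times_XS\to X$ with $p(x,y,y)=x$ whenever $xRy$ and $p(y,y,z)=z$ whenever $ySz$. (Huq=Smith) means: for every skew brace $X$ and all congruences $R,S$ on $X$, $[I_R,I_S]=0$ implies $[R,S]=0$. *)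

theory Defs
  imports "HOL-Algebra.Group" "HOL-Library.FuncSet"
begin

record 'a skb =
  carr :: "'a set"
  star :: "'a \<Rightarrow> 'a \<Rightarrow> 'a"
  circ :: "'a \<Rightarrow> 'a \<Rightarrow> 'a"
  unit :: "'a"

definition add_grp :: "'a skb \<Rightarrow> 'a monoid" where
  "add_grp X = \<lparr>carrier = carr X, mult = star X, one = unit X\<rparr>"

definition mul_grp :: "'a skb \<Rightarrow> 'a monoid" where
  "mul_grp X = \<lparr>carrier = carr X, mult = circ X, one = unit X\<rparr>"

definition inv_star :: "'a skb \<Rightarrow> 'a \<Rightarrow> 'a" where
  "inv_star X a = inv\<^bsub>add_grp X\<^esub> a"

definition inv_circ :: "'a skb \<Rightarrow> 'a \<Rightarrow> 'a" where
  "inv_circ X a = inv\<^bsub>mul_grp X\<^esub> a"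

definition skew_brace :: "'a skb \<Rightarrow> bool" where
  "skew_brace X \<longleftrightarrow> group (add_grp X) \<and> group (mul_grp X) \<and>
     (\<forall>a\<in>carr X. \<forall>b\<in>carr X. \<forall>c\<in>carr X.
        circ X a (star X b c) = star X (star X (circ X a b) (inv_star X a)) (circ X a c))"

definition sub_skb :: "'a set \<Rightarrow> 'a skb \<Rightarrow> bool" where
  "sub_skb B X \<longleftrightarrow> B \<subseteq> carr X \<and> unit X \<in> B \<and>
     (\<forall>x\<in>B. \<forall>y\<in>B. star X x y \<in> B \<and> circ X x y \<in> B) \<and>
     (\<forall>x\<in>B. inv_star X x \<in> B \<and> inv_circ X x \<in> B)"

definition restr :: "'a skb \<Rightarrow> 'a set \<Rightarrow> 'a skb" where
  "restr X B = \<lparr>carr = B, star = star X, circ = circ X, unit = unit X\<rparr>"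

definition prod_skb :: "'a skb \<Rightarrow> 'b skb \<Rightarrow> ('a \<times> 'b) skb" where
  "prod_skb X Y = \<lparr>carr = carr X \<times> carr Y,
     star = (\<lambda>(a,b) (c,d). (star X a c, star Y b d)),
     circ = (\<lambda>(a,b) (c,d). (circ X a c, circ Y b d)),
     unit = (unit X, unit Y)\<rparr>"

definition skb_hom :: "'a skb \<Rightarrow> 'b skb \<Rightarrow> ('a \<Rightarrow> 'b) \<Rightarrow> bool" where
  "skb_hom X Y f \<longleftrightarrow> f \<in> carr X \<rightarrow> carr Y \<and>
     (\<forall>x\<in>carr X. \<forall>y\<in>carr X. f (star X x y) = star Y (f x) (f y) \<and>
                               f (circ X x y) = circ Y (f x) (f y))"

definition skb_congruence :: "'a skb \<Rightarrow> ('a \<times> 'a) set \<Rightarrow> bool" where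
  "skb_congruence X R \<longleftrightarrow> equiv (carr X) R \<and> sub_skb R (prod_skb X X)"

definition ideal_of :: "'a skb \<Rightarrow> ('a \<times> 'a) set \<Rightarrow> 'a set" where
  "ideal_of X R = {x \<in> carr X. (x, unit X) \<in> R}"

definition huq_zero :: "'a skb \<Rightarrow> 'a set \<Rightarrow> 'a set \<Rightarrow> bool" where
  "huq_zero X U V \<longleftrightarrow> (\<exists>\<phi>. skb_hom (prod_skb (restr X U) (restr X V)) X \<phi> \<and>
     (\<forall>u\<in>U. \<phi> (u, unit X) = u) \<and> (\<forall>v\<in>V. \<phi> (unit X, v) = v))"

definition fib_prod :: "('a \<times> 'a) set \<Rightarrow> ('a \<times> 'a) set \<Rightarrow> ('a \<times> 'a \<times> 'a) set" where
  "fib_prod R S = {(x, y, z). (x, y) \<in> R \<and> (y, z) \<in> S}"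

definition smith_zero :: "'a skb \<Rightarrow> ('a \<times> 'a) set \<Rightarrow> ('a \<times> 'a) set \<Rightarrow> bool" where
  "smith_zero X R S \<longleftrightarrow> (\<exists>p. skb_hom (restr (prod_skb X (prod_skb X X)) (fib_prod R S)) X p \<and>
     (\<forall>x y. (x, y) \<in> R \<longrightarrow> p (x, y, y) = x) \<and> (\<forall>y z. (y, z) \<in> S \<longrightarrow> p (y, y, z) = z))"

end

theory Submission
  imports Defs
begin

text \<open>A morphism \<open>\<phi>\<close> witnessing \<open>[I\<^sub>R, I\<^sub>S] = 0\<close> is forced to be \<open>\<phi>(u, v) = u * v = v * u = u \<circ> v = v \<circ> u\<close>.
  This gives the two commutation conditions, and with \<open>u = x \<circ> y\<^sup>-\<^sup>\<circ> \<in> I\<^sub>R\<close>, \<open>w = y\<^sup>-\<^sup>* * z \<in> I\<^sub>S\<close>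
  the brace law turns \<open>u \<circ> w = u * w\<close> into \<open>u \<circ> (y * w) = (u \<circ> y) * w\<close>, i.e. into
  \<open>x \<circ> y\<^sup>-\<^sup>\<circ> \<circ> z = x * y\<^sup>-\<^sup>* * z\<close>. Conversely, the Mal'cev term \<open>p(x, y, z) = x * y\<^sup>-\<^sup>* * z\<close> is a
  \<open>*\<close>-homomorphism on \<open>R \<times>\<^sub>X S\<close> as soon as \<open>I\<^sub>R\<close> and \<open>I\<^sub>S\<close> commute in \<open>(X, *)\<close>; by the third
  condition it coincides there with \<open>x \<circ> y\<^sup>-\<^sup>\<circ> \<circ> z\<close>, which is a \<open>\<circ>\<close>-homomorphism for the same
  reason. Finally \<open>\<phi>(u, v) = p(u, 1, v)\<close> recovers a Huq morphism from a Smith one.\<close>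

definition mult_compatible :: "('a, 'b) monoid_scheme \<Rightarrow> ('a \<times> 'a) set \<Rightarrow> bool" where
  "mult_compatible G R \<longleftrightarrow> (\<forall>(a, b)\<in>R. \<forall>(c, d)\<in>R. (a \<otimes>\<^bsub>G\<^esub> c, b \<otimes>\<^bsub>G\<^esub> d) \<in> R)"

lemma (in group) mult_inv_rel_one:
  assumes "equiv (carrier G) R" and "mult_compatible G R" and "(x, y) \<in> R"
  shows "(x \<otimes> inv y, \<one>) \<in> R"
proof -
  have "y \<in> carrier G" and "(inv y, inv y) \<in> R"
    using assms by (auto simp: equiv_def refl_on_def)
  with assms show ?thesis
    unfolding mult_compatible_def by fastforce
qed

lemma (in group) inv_mult_rel_one:
  assumes "equiv (carrier G) R" and "mult_compatible G R" and "(y, z) \<in> R"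
  shows "(inv y \<otimes> z, \<one>) \<in> R"
proof -
  have "y \<in> carrier G" and "(inv y, inv y) \<in> R"
    using assms by (auto simp: equiv_def refl_on_def)
  with assms have "(\<one>, inv y \<otimes> z) \<in> R"
    unfolding mult_compatible_def by fastforce
  then show ?thesis
    using assms(1) by (auto simp: equiv_def sym_def)
qed

lemma (in group) malcev_term_mult:
  assumes "x \<in> carrier G" "y \<in> carrier G" "z \<in> carrier G"
    and "x' \<in> carrier G" "y' \<in> carrier G" "z' \<in> carrier G"
    and commute: "x' \<otimes> inv y' \<otimes> (inv y \<otimes> z) = inv y \<otimes> z \<otimes> (x' \<otimes> inv y')"
  shows "x \<otimes> x' \<otimes> inv (y \<otimes> y') \<otimes> (z \<otimes> z') = x \<otimes> inv y \<otimes> z \<otimes> (x' \<otimes> inv y' \<otimes> z')"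
proof -
  have "x \<otimes> x' \<otimes> inv (y \<otimes> y') \<otimes> (z \<otimes> z') = x \<otimes> (x' \<otimes> inv y' \<otimes> (inv y \<otimes> z)) \<otimes> z'"
    using assms(1-6) by (simp add: inv_mult_group m_assoc)
  also have "\<dots> = x \<otimes> (inv y \<otimes> z \<otimes> (x' \<otimes> inv y')) \<otimes> z'"
    by (simp only: commute)
  also have "\<dots> = x \<otimes> inv y \<otimes> z \<otimes> (x' \<otimes> inv y' \<otimes> z')"
    using assms(1-6) by (simp add: m_assoc)
  finally show ?thesis .
qed

lemma (in monoid) unital_bihom_eq_mult:
  assumes hom: "\<And>u v u' v'. u \<in> U \<Longrightarrow> v \<in> V \<Longrightarrow> u' \<in> U \<Longrightarrow> v' \<in> V \<Longrightarrow>
      f (u \<otimes> u', v \<otimes> v') = f (u, v) \<otimes> f (u', v')"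
    and "U \<subseteq> carrier G" "V \<subseteq> carrier G" "\<one> \<in> U" "\<one> \<in> V"
    and "\<And>u. u \<in> U \<Longrightarrow> f (u, \<one>) = u" "\<And>v. v \<in> V \<Longrightarrow> f (\<one>, v) = v"
    and "u \<in> U" "v \<in> V"
  shows "f (u, v) = u \<otimes> v" and "f (u, v) = v \<otimes> u"
proof -
  have "u \<in> carrier G" "v \<in> carrier G"
    using assms by auto
  then have "f (u, v) = f (u \<otimes> \<one>, \<one> \<otimes> v)" and "f (u, v) = f (\<one> \<otimes> u, v \<otimes> \<one>)"
    by simp_all
  then show "f (u, v) = u \<otimes> v" and "f (u, v) = v \<otimes> u"
    using hom assms(4-) by simp_all
qed

lemma skb_hom_prod_restr_iff:
  "skb_hom (prod_skb (restr X U) (restr X V)) Y f \<longleftrightarrow> f \<in> U \<times> V \<rightarrow> carr Y \<and>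
     (\<forall>u\<in>U. \<forall>v\<in>V. \<forall>u'\<in>U. \<forall>v'\<in>V.
        f (star X u u', star X v v') = star Y (f (u, v)) (f (u', v')) \<and>
        f (circ X u u', circ X v v') = circ Y (f (u, v)) (f (u', v')))"
  by (auto simp: skb_hom_def prod_skb_def restr_def)

lemma skb_hom_fib_prod_iff:
  "skb_hom (restr (prod_skb X (prod_skb X X)) (fib_prod R S)) Y p \<longleftrightarrow> p \<in> fib_prod R S \<rightarrow> carr Y \<and>
     (\<forall>x y z x' y' z'. (x, y) \<in> R \<longrightarrow> (y, z) \<in> S \<longrightarrow> (x', y') \<in> R \<longrightarrow> (y', z') \<in> S \<longrightarrow>
        p (star X x x', star X y y', star X z z') = star Y (p (x, y, z)) (p (x', y', z')) \<and>
        p (circ X x x', circ X y y', circ X z z') = circ Y (p (x, y, z)) (p (x', y', z')))"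
  by (auto simp: skb_hom_def prod_skb_def restr_def fib_prod_def)

lemma skb_congruenceD:
  assumes "skb_congruence X R"
  shows "equiv (carr X) R" and "mult_compatible (add_grp X) R" and "mult_compatible (mul_grp X) R"
  using assms by (auto simp: skb_congruence_def sub_skb_def prod_skb_def mult_compatible_def
      add_grp_def mul_grp_def)

lemma skb_congruence_carr:
  assumes "skb_congruence X R" and "(x, y) \<in> R"
  shows "x \<in> carr X" and "y \<in> carr X"
  using skb_congruenceD(1)[OF assms(1)] assms(2) by (auto simp: equiv_def refl_on_def)

lemma skb_congruence_circ:
  assumes "skb_congruence X R" and "(a, b) \<in> R" "(c, d) \<in> R"
  shows "(circ X a c, circ X b d) \<in> R"
  using assms unfolding skb_congruence_def sub_skb_def prod_skb_def by fastforce

definition commuting_conditions :: "'a skb \<Rightarrow> ('a \<times> 'a) set \<Rightarrow> ('a \<times> 'a) set \<Rightarrow> bool" where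
  "commuting_conditions X R S \<longleftrightarrow>
     (\<forall>a\<in>ideal_of X R. \<forall>b\<in>ideal_of X S. star X a b = star X b a) \<and>
     (\<forall>a\<in>ideal_of X R. \<forall>b\<in>ideal_of X S. circ X a b = circ X b a) \<and>
     (\<forall>x y z. (x, y) \<in> R \<and> (y, z) \<in> S \<longrightarrow>
        star X (star X x (inv_star X y)) z = circ X (circ X x (inv_circ X y)) z)"

definition malcev_term :: "'a skb \<Rightarrow> 'a \<Rightarrow> 'a \<Rightarrow> 'a \<Rightarrow> 'a" where
  "malcev_term X x y z = star X (star X x (inv_star X y)) z"

locale skew_brace_on =
  fixes X :: "'a skb"
  assumes skew_brace: "skew_brace X"
begin

sublocale add: group "add_grp X"
  rewrites "carrier (add_grp X) = carr X" and "mult (add_grp X) = star X"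
    and "one (add_grp X) = unit X" and "m_inv (add_grp X) = inv_star X"
  using skew_brace by (auto simp: skew_brace_def add_grp_def inv_star_def[abs_def])

sublocale mul: group "mul_grp X"
  rewrites "carrier (mul_grp X) = carr X" and "mult (mul_grp X) = circ X"
    and "one (mul_grp X) = unit X" and "m_inv (mul_grp X) = inv_circ X"
  using skew_brace by (auto simp: skew_brace_def mul_grp_def inv_circ_def[abs_def])

lemma circ_star_if_circ_eq_star:
  assumes "u \<in> carr X" "y \<in> carr X" "w \<in> carr X" and "circ X u w = star X u w"
  shows "circ X u (star X y w) = star X (circ X u y) w"
proof -
  have "circ X u (star X y w) = star X (star X (circ X u y) (inv_star X u)) (star X u w)"
    using skew_brace assms by (simp add: skew_brace_def)
  also have "\<dots> = star X (circ X u y) w"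
    using assms by (simp add: add.m_assoc flip: add.m_assoc[of "inv_star X u"])
  finally show ?thesis .
qed

lemma div_in_ideal_of:
  assumes R: "skb_congruence X R" and xy: "(x, y) \<in> R"
  shows "star X x (inv_star X y) \<in> ideal_of X R" and "circ X x (inv_circ X y) \<in> ideal_of X R"
    and "star X (inv_star X x) y \<in> ideal_of X R" and "circ X (inv_circ X x) y \<in> ideal_of X R"
  using add.mult_inv_rel_one[OF skb_congruenceD(1,2)[OF R] xy]
    mul.mult_inv_rel_one[OF skb_congruenceD(1,3)[OF R] xy]
    add.inv_mult_rel_one[OF skb_congruenceD(1,2)[OF R] xy]
    mul.inv_mult_rel_one[OF skb_congruenceD(1,3)[OF R] xy]
    skb_congruence_carr[OF R xy]
  by (simp_all add: ideal_of_def)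

lemma huq_zero_products_eq:
  assumes R: "skb_congruence X R" and S: "skb_congruence X S"
    and "huq_zero X (ideal_of X R) (ideal_of X S)"
    and "a \<in> ideal_of X R" "b \<in> ideal_of X S"
  shows "star X a b = star X b a" and "circ X a b = circ X b a" and "circ X a b = star X a b"
proof -
  let ?I = "ideal_of X R" and ?J = "ideal_of X S"
  obtain \<phi> where hom: "skb_hom (prod_skb (restr X ?I) (restr X ?J)) X \<phi>"
    and \<phi>I: "\<forall>u\<in>?I. \<phi> (u, unit X) = u" and \<phi>J: "\<forall>v\<in>?J. \<phi> (unit X, v) = v"
    using assms(3) unfolding huq_zero_def by blast
  have \<phi>_star: "\<phi> (star X u u', star X v v') = star X (\<phi> (u, v)) (\<phi> (u', v'))"
    and \<phi>_circ: "\<phi> (circ X u u', circ X v v') = circ X (\<phi> (u, v)) (\<phi> (u', v'))"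
    if "u \<in> ?I" "v \<in> ?J" "u' \<in> ?I" "v' \<in> ?J" for u v u' v'
    using hom that unfolding skb_hom_prod_restr_iff by blast+
  have sub: "?I \<subseteq> carr X" "?J \<subseteq> carr X"
    by (auto simp: ideal_of_def)
  have units: "unit X \<in> ?I" "unit X \<in> ?J"
    using skb_congruenceD(1)[OF R] skb_congruenceD(1)[OF S]
    by (auto simp: ideal_of_def equiv_def refl_on_def)
  note \<phi>_unital = sub units \<phi>I[rule_format] \<phi>J[rule_format] assms(4,5)
  have "\<phi> (a, b) = star X a b" "\<phi> (a, b) = star X b a"
    using add.unital_bihom_eq_mult[OF \<phi>_star \<phi>_unital] by auto
  moreover have "\<phi> (a, b) = circ X a b" "\<phi> (a, b) = circ X b a"
    using mul.unital_bihom_eq_mult[OF \<phi>_circ \<phi>_unital] by auto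
  ultimately show "star X a b = star X b a" "circ X a b = circ X b a" "circ X a b = star X a b"
    by simp_all
qed

lemma malcev_terms_eq:
  assumes R: "skb_congruence X R" and S: "skb_congruence X S"
    and circ_eq_star: "\<And>a b. a \<in> ideal_of X R \<Longrightarrow> b \<in> ideal_of X S \<Longrightarrow> circ X a b = star X a b"
    and xy: "(x, y) \<in> R" and yz: "(y, z) \<in> S"
  shows "star X (star X x (inv_star X y)) z = circ X (circ X x (inv_circ X y)) z"
proof -
  have carr: "x \<in> carr X" "y \<in> carr X" "z \<in> carr X"
    using skb_congruence_carr[OF R xy] skb_congruence_carr[OF S yz] by auto
  define u where "u = circ X x (inv_circ X y)"
  define w where "w = star X (inv_star X y) z"
  have u: "u \<in> ideal_of X R"
    unfolding u_def by (rule div_in_ideal_of(2)[OF R xy])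
  have w: "w \<in> ideal_of X S"
    unfolding w_def by (rule div_in_ideal_of(3)[OF S yz])
  have "circ X u z = circ X u (star X y w)"
    using carr by (simp add: w_def flip: add.m_assoc)
  also have "\<dots> = star X (circ X u y) w"
    using u w by (intro circ_star_if_circ_eq_star circ_eq_star carr) (auto simp: ideal_of_def)
  also have "\<dots> = star X (star X x (inv_star X y)) z"
    using carr by (simp add: u_def w_def mul.m_assoc add.m_assoc)
  finally show ?thesis
    using carr by (simp add: u_def mul.m_assoc)
qed

lemma huq_zero_imp_commuting_conditions:
  assumes "skb_congruence X R" and "skb_congruence X S"
    and "huq_zero X (ideal_of X R) (ideal_of X S)"
  shows "commuting_conditions X R S"
  unfolding commuting_conditions_def
  using huq_zero_products_eq[OF assms] malcev_terms_eq[OF assms(1,2) huq_zero_products_eq(3)[OF assms]]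
  by blast

lemma malcev_term_hom:
  assumes R: "skb_congruence X R" and S: "skb_congruence X S"
    and conditions: "commuting_conditions X R S"
    and h: "(x, y) \<in> R" "(y, z) \<in> S" "(x', y') \<in> R" "(y', z') \<in> S"
  shows "malcev_term X (star X x x') (star X y y') (star X z z') =
      star X (malcev_term X x y z) (malcev_term X x' y' z')"
    and "malcev_term X (circ X x x') (circ X y y') (circ X z z') =
      circ X (malcev_term X x y z) (malcev_term X x' y' z')"
proof -
  have star_commute: "\<And>a b. a \<in> ideal_of X R \<Longrightarrow> b \<in> ideal_of X S \<Longrightarrow> star X a b = star X b a"
    and circ_commute: "\<And>a b. a \<in> ideal_of X R \<Longrightarrow> b \<in> ideal_of X S \<Longrightarrow> circ X a b = circ X b a"
    using conditions unfolding commuting_conditions_def by blast+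
  have malcev_circ: "malcev_term X a b c = circ X (circ X a (inv_circ X b)) c"
    if "(a, b) \<in> R" "(b, c) \<in> S" for a b c
    using conditions that unfolding commuting_conditions_def malcev_term_def by blast
  have carr: "x \<in> carr X" "y \<in> carr X" "z \<in> carr X" "x' \<in> carr X" "y' \<in> carr X" "z' \<in> carr X"
    using skb_congruence_carr[OF R h(1)] skb_congruence_carr[OF S h(2)]
      skb_congruence_carr[OF R h(3)] skb_congruence_carr[OF S h(4)] by auto
  note ideals = div_in_ideal_of[OF R h(3)] div_in_ideal_of[OF S h(2)]
  have "star X (star X x' (inv_star X y')) (star X (inv_star X y) z) =
      star X (star X (inv_star X y) z) (star X x' (inv_star X y'))"
    by (rule star_commute[OF ideals(1,7)])
  then show "malcev_term X (star X x x') (star X y y') (star X z z') =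
      star X (malcev_term X x y z) (malcev_term X x' y' z')"
    unfolding malcev_term_def by (rule add.malcev_term_mult[OF carr])
  have "circ X (circ X x' (inv_circ X y')) (circ X (inv_circ X y) z) =
      circ X (circ X (inv_circ X y) z) (circ X x' (inv_circ X y'))"
    by (rule circ_commute[OF ideals(2,8)])
  note circ_malcev_mult = mul.malcev_term_mult[OF carr this]
  have "(circ X x x', circ X y y') \<in> R" and "(circ X y y', circ X z z') \<in> S"
    using skb_congruence_circ[OF R h(1,3)] skb_congruence_circ[OF S h(2,4)] .
  then have "malcev_term X (circ X x x') (circ X y y') (circ X z z') =
      circ X (circ X (circ X x x') (inv_circ X (circ X y y'))) (circ X z z')"
    by (rule malcev_circ)
  also have "\<dots> = circ X (circ X (circ X x (inv_circ X y)) z) (circ X (circ X x' (inv_circ X y')) z')"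
    by (rule circ_malcev_mult)
  also have "\<dots> = circ X (malcev_term X x y z) (malcev_term X x' y' z')"
    using malcev_circ h by simp
  finally show "malcev_term X (circ X x x') (circ X y y') (circ X z z') =
      circ X (malcev_term X x y z) (malcev_term X x' y' z')" .
qed

lemma commuting_conditions_imp_smith_zero:
  assumes R: "skb_congruence X R" and S: "skb_congruence X S"
    and "commuting_conditions X R S"
  shows "smith_zero X R S"
proof -
  define p where "p = (\<lambda>(x, y, z). malcev_term X x y z)"
  have "p \<in> fib_prod R S \<rightarrow> carr X"
    using skb_congruence_carr[OF R] skb_congruence_carr[OF S]
    by (auto simp: fib_prod_def p_def malcev_term_def)
  then have "skb_hom (restr (prod_skb X (prod_skb X X)) (fib_prod R S)) X p"
    unfolding skb_hom_fib_prod_iff p_def using malcev_term_hom[OF assms] by simp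
  moreover have "\<forall>x y. (x, y) \<in> R \<longrightarrow> p (x, y, y) = x"
    using skb_congruence_carr[OF R] by (auto simp: p_def malcev_term_def add.m_assoc)
  moreover have "\<forall>y z. (y, z) \<in> S \<longrightarrow> p (y, y, z) = z"
    using skb_congruence_carr[OF S] by (auto simp: p_def malcev_term_def)
  ultimately show ?thesis
    unfolding smith_zero_def by blast
qed

lemma smith_zero_imp_huq_zero:
  assumes R: "skb_congruence X R" and S: "skb_congruence X S" and "smith_zero X R S"
  shows "huq_zero X (ideal_of X R) (ideal_of X S)"
proof -
  let ?I = "ideal_of X R" and ?J = "ideal_of X S"
  obtain p where hom: "skb_hom (restr (prod_skb X (prod_skb X X)) (fib_prod R S)) X p"
    and pR: "\<forall>x y. (x, y) \<in> R \<longrightarrow> p (x, y, y) = x" and pS: "\<forall>y z. (y, z) \<in> S \<longrightarrow> p (y, y, z) = z"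
    using assms(3) unfolding smith_zero_def by blast
  have IR: "(u, unit X) \<in> R" if "u \<in> ?I" for u
    using that by (simp add: ideal_of_def)
  have JS: "(unit X, v) \<in> S" if "v \<in> ?J" for v
    using that skb_congruenceD(1)[OF S] by (auto simp: ideal_of_def equiv_def sym_def)
  define \<phi> where "\<phi> = (\<lambda>(u, v). p (u, unit X, v))"
  have "\<phi> \<in> ?I \<times> ?J \<rightarrow> carr X"
    using hom IR JS unfolding skb_hom_fib_prod_iff \<phi>_def by (fastforce simp: fib_prod_def)
  moreover have "\<phi> (star X u u', star X v v') = star X (\<phi> (u, v)) (\<phi> (u', v')) \<and>
      \<phi> (circ X u u', circ X v v') = circ X (\<phi> (u, v)) (\<phi> (u', v'))"
    if "u \<in> ?I" "v \<in> ?J" "u' \<in> ?I" "v' \<in> ?J" for u v u' v'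
  proof -
    have "p (star X u u', star X (unit X) (unit X), star X v v') =
          star X (p (u, unit X, v)) (p (u', unit X, v')) \<and>
        p (circ X u u', circ X (unit X) (unit X), circ X v v') =
          circ X (p (u, unit X, v)) (p (u', unit X, v'))"
      using hom IR[OF that(1)] JS[OF that(2)] IR[OF that(3)] JS[OF that(4)]
      unfolding skb_hom_fib_prod_iff by blast
    then show ?thesis
      by (simp add: \<phi>_def)
  qed
  ultimately have "skb_hom (prod_skb (restr X ?I) (restr X ?J)) X \<phi>"
    unfolding skb_hom_prod_restr_iff by blast
  moreover have "\<forall>u\<in>?I. \<phi> (u, unit X) = u" and "\<forall>v\<in>?J. \<phi> (unit X, v) = v"
    using pR pS IR JS by (simp_all add: \<phi>_def)
  ultimately show ?thesis
    unfolding huq_zero_def by blast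
qed

lemma huq_zero_iff_commuting_conditions:
  assumes "skb_congruence X R" and "skb_congruence X S"
  shows "huq_zero X (ideal_of X R) (ideal_of X S) \<longleftrightarrow> commuting_conditions X R S"
  using huq_zero_imp_commuting_conditions[OF assms] smith_zero_imp_huq_zero[OF assms]
    commuting_conditions_imp_smith_zero[OF assms] by blast

lemma huq_zero_imp_smith_zero:
  assumes "skb_congruence X R" and "skb_congruence X S"
    and "huq_zero X (ideal_of X R) (ideal_of X S)"
  shows "smith_zero X R S"
  using assms by (intro commuting_conditions_imp_smith_zero huq_zero_imp_commuting_conditions)

lemma huq_zero_iff_smith_zero:
  assumes "skb_congruence X R" and "skb_congruence X S"
  shows "huq_zero X (ideal_of X R) (ideal_of X S) \<longleftrightarrow> smith_zero X R S"
  using huq_zero_imp_smith_zero[OF assms] smith_zero_imp_huq_zero[OF assms] by blast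

end

theorem proposition3p10:
  fixes X :: "'a skb" and R S :: "('a \<times> 'a) set"
  assumes "skew_brace X" and "skb_congruence X R" and "skb_congruence X S"
  shows "(huq_zero X (ideal_of X R) (ideal_of X S) \<longleftrightarrow>
           ((\<forall>a\<in>ideal_of X R. \<forall>b\<in>ideal_of X S. star X a b = star X b a) \<and>
            (\<forall>a\<in>ideal_of X R. \<forall>b\<in>ideal_of X S. circ X a b = circ X b a) \<and>
            (\<forall>x y z. (x, y) \<in> R \<and> (y, z) \<in> S \<longrightarrow>
               star X (star X x (inv_star X y)) z = circ X (circ X x (inv_circ X y)) z))) \<and>
         (huq_zero X (ideal_of X R) (ideal_of X S) \<longleftrightarrow> smith_zero X R S) \<and>
         (\<forall>(Y :: 'b skb) R' S'. skew_brace Y \<and> skb_congruence Y R' \<and> skb_congruence Y S' \<and>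
            huq_zero Y (ideal_of Y R') (ideal_of Y S') \<longrightarrow> smith_zero Y R' S')"
proof -
  interpret skew_brace_on X
    by unfold_locales (rule assms(1))
  show ?thesis
    using huq_zero_iff_commuting_conditions[OF assms(2,3), unfolded commuting_conditions_def]
      huq_zero_iff_smith_zero[OF assms(2,3)]
      skew_brace_on.huq_zero_imp_smith_zero[OF skew_brace_on.intro]
    by blast
qed

end
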